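(* Let $(Z,d)$ be a compact metric space which admits a homogeneous approximation graph. Then $Z$ has finite Assouad dimension.
   Context: A homogeneous approximation graph for $(Z,d)$ is given by a refining sequence $(\mathcal V_n)_{n\ge0}$ of finite open covers of $Z$ (so $\mathcal V_0=\{Z\}$, every element of $\mathcal V_{n+1}$ is contained in some element of $\mathcal V_n$, and $\max_{V\in\mathcal V_n}\operatorname{diam}V\to0$), together with constants $\lambda>1$, $0<\eta\le\theta$ and $C_\Gamma,N_\Gamma\in\mathbb N$ such that for every $n\in\mathbb N$: (1) $\max_{V\in\mathcal V_n}\operatorname{diam}(V)\le\lambda^{-n+1}\theta$; (2) $\operatorname{Leb}(\mathcal V_n)\ge\lambda^{-n+1}\eta$, where $\operatorname{Leb}(\mathcal U)=\min_{z\in Z}\max_{U\in\mathcal U}d(z,Z\setminus U)$; (3) each $v\in\mathcal V_n$ contains at most $C_\Gamma$ elements of $\mathcal V_{n+1}$, i.e. $\#\{w\in\mathcal V_{n+1}:w\subset v\}\le C_\Gamma$; (4) $\#\{w\in\mathcal V_n:w\cap v\ne\varnothing\}\le N_\Gamma$ for every $v\in\mathcal V_n$. The Assouad dimension is the infimum of $s\ge0$ for which there is $C$ with $\#Y\le C(b/a)^s$ whenever $0<a\le b$ and $Y\subset Z$ is finite with $a\le d(y,y')\le b$ for all distinct $y,y'\in Y$. *)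

theory Defs
  imports "HOL-Analysis.Analysis" "HOL-Library.Extended_Real"
begin

definition dist_compl :: "'a::metric_space set \<Rightarrow> 'a set \<Rightarrow> 'a \<Rightarrow> ereal" where
  "dist_compl Z U z = (if Z - U = {} then \<infinity> else ereal (infdist z (Z - U)))"

definition lebesgue_number :: "'a::metric_space set \<Rightarrow> 'a set set \<Rightarrow> ereal" where
  "lebesgue_number Z \<U> = (INF z\<in>Z. SUP U\<in>\<U>. dist_compl Z U z)"

definition finite_open_cover :: "'a::metric_space set \<Rightarrow> 'a set set \<Rightarrow> bool" where
  "finite_open_cover Z \<U> \<longleftrightarrow> finite \<U> \<and> (\<forall>U\<in>\<U>. openin (top_of_set Z) U) \<and> \<Union>\<U> = Z"

definition homogeneous_approximation_graph ::
  "'a::metric_space set \<Rightarrow> (nat \<Rightarrow> 'a set set) \<Rightarrow> real \<Rightarrow> real \<Rightarrow> real \<Rightarrow> nat \<Rightarrow> nat \<Rightarrow> bool" where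
  "homogeneous_approximation_graph Z \<V> lam \<eta> \<theta> C\<Gamma> N\<Gamma> \<longleftrightarrow>
     (\<forall>n. finite_open_cover Z (\<V> n)) \<and>
     \<V> 0 = {Z} \<and>
     (\<forall>n. \<forall>W\<in>\<V> (Suc n). \<exists>V\<in>\<V> n. W \<subseteq> V) \<and>
     (\<forall>\<epsilon>>0. \<exists>N. \<forall>n\<ge>N. \<forall>V\<in>\<V> n. diameter V < \<epsilon>) \<and>
     lam > 1 \<and> 0 < \<eta> \<and> \<eta> \<le> \<theta> \<and>
     (\<forall>n\<ge>1.
        (\<forall>V\<in>\<V> n. diameter V \<le> lam powr (1 - real n) * \<theta>) \<and>
        lebesgue_number Z (\<V> n) \<ge> ereal (lam powr (1 - real n) * \<eta>) \<and>
        (\<forall>v\<in>\<V> n. card {w\<in>\<V> (Suc n). w \<subseteq> v} \<le> C\<Gamma>) \<and>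
        (\<forall>v\<in>\<V> n. card {w\<in>\<V> n. w \<inter> v \<noteq> {}} \<le> N\<Gamma>))"

definition assouad_admissible :: "'a::metric_space set \<Rightarrow> real \<Rightarrow> bool" where
  "assouad_admissible Z s \<longleftrightarrow> s \<ge> 0 \<and> (\<exists>C::real. \<forall>a b Y. 0 < a \<longrightarrow> a \<le> b \<longrightarrow> Y \<subseteq> Z \<longrightarrow> finite Y \<longrightarrow>
      (\<forall>y\<in>Y. \<forall>y'\<in>Y. y \<noteq> y' \<longrightarrow> a \<le> dist y y' \<and> dist y y' \<le> b) \<longrightarrow>
      real (card Y) \<le> C * (b / a) powr s)"

text \<open>Assouad dimension as an extended real (infimum of empty set = infinity).\<close>
definition assouad_dim :: "'a::metric_space set \<Rightarrow> ereal" where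
  "assouad_dim Z = (INF s\<in>{s. assouad_admissible Z s}. ereal s)"

end

theory Submission
  imports Defs
begin

text \<open>
  Let \<open>Y\<close> be \<open>a\<close>-separated with all distances at most \<open>b\<close>. At the coarse level \<open>m\<close> where
  the Lebesgue number of \<open>\<V> m\<close> exceeds \<open>b\<close>, the whole of \<open>Y\<close> lies in one element \<open>v\<close>; at the
  fine level \<open>n\<close> where all elements have diameter below \<open>a\<close>, distinct points of \<open>Y\<close> lie in
  distinct elements. Every element of \<open>\<V> n\<close> meeting \<open>Y\<close> descends from one of the at most
  \<open>N\<^sub>\<Gamma>\<close> elements of \<open>\<V> m\<close> meeting \<open>v\<close>, and each of these has at most \<open>C\<^sub>\<Gamma>\<^sup>n\<^sup>-\<^sup>m\<close>
  descendants. Since \<open>n - m \<le> log\<^sub>\<lambda> (b/a) + const\<close>, this gives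
  \<open>#Y \<le> K (b/a)\<^sup>s\<close> with \<open>s = log\<^sub>\<lambda> C\<^sub>\<Gamma>\<close>.
  Compactness only serves to make the cover elements bounded: HOL's \<open>diameter\<close> is \<open>0\<close> on
  unbounded sets.
\<close>

lemma card_meeting_refinement_le:
  fixes V :: "nat \<Rightarrow> 'a set set"
  assumes finite: "\<And>j. finite (V j)"
    and parent: "\<And>j w. w \<in> V (Suc j) \<Longrightarrow> \<exists>p\<in>V j. w \<subseteq> p"
    and branching: "\<And>j p. m \<le> j \<Longrightarrow> p \<in> V j \<Longrightarrow> card {w\<in>V (Suc j). w \<subseteq> p} \<le> C"
  shows "card {w\<in>V (m + k). w \<inter> Y \<noteq> {}} \<le> card {w\<in>V m. w \<inter> Y \<noteq> {}} * C ^ k"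
proof (induction k)
  case 0
  then show ?case by simp
next
  case (Suc k)
  let ?P = "{p\<in>V (m + k). p \<inter> Y \<noteq> {}}"
  let ?children = "\<lambda>p. {w\<in>V (Suc (m + k)). w \<subseteq> p}"
  have "{w\<in>V (m + Suc k). w \<inter> Y \<noteq> {}} \<subseteq> (\<Union>p\<in>?P. ?children p)"
    using parent by fastforce
  then have "card {w\<in>V (m + Suc k). w \<inter> Y \<noteq> {}} \<le> card (\<Union>p\<in>?P. ?children p)"
    using finite by (intro card_mono) auto
  also have "\<dots> \<le> (\<Sum>p\<in>?P. card (?children p))"
    using finite by (intro card_UN_le) auto
  also have "\<dots> \<le> (\<Sum>p\<in>?P. C)"
    using branching by (intro sum_mono) auto
  also have "\<dots> \<le> card {w\<in>V m. w \<inter> Y \<noteq> {}} * C ^ k * C"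
    using Suc.IH by simp
  finally show ?case
    by (simp add: mult_ac)
qed

lemma card_le_card_meeting_if_separated:
  fixes Y :: "'a::metric_space set"
  assumes "finite \<U>" "Y \<subseteq> \<Union>\<U>"
    and small: "\<And>U. U \<in> \<U> \<Longrightarrow> bounded U \<and> diameter U < a"
    and separated: "\<And>y y'. y \<in> Y \<Longrightarrow> y' \<in> Y \<Longrightarrow> y \<noteq> y' \<Longrightarrow> a \<le> dist y y'"
  shows "card Y \<le> card {U\<in>\<U>. U \<inter> Y \<noteq> {}}"
proof -
  have "\<forall>y\<in>Y. \<exists>U\<in>\<U>. y \<in> U"
    using assms(2) by blast
  then obtain f where f: "\<And>y. y \<in> Y \<Longrightarrow> f y \<in> \<U> \<and> y \<in> f y"
    by metis
  have "inj_on f Y"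
  proof (rule inj_onI, rule ccontr)
    fix y y' assume "y \<in> Y" "y' \<in> Y" "f y = f y'" "y \<noteq> y'"
    then have "f y \<in> \<U>" "y \<in> f y" "y' \<in> f y"
      using f by auto
    then have "dist y y' \<le> diameter (f y)"
      using small by (intro diameter_bounded_bound) auto
    moreover have "diameter (f y) < a"
      using small \<open>f y \<in> \<U>\<close> by blast
    moreover have "a \<le> dist y y'"
      using separated \<open>y \<in> Y\<close> \<open>y' \<in> Y\<close> \<open>y \<noteq> y'\<close> by blast
    ultimately show False
      by linarith
  qed
  moreover have "f ` Y \<subseteq> {U\<in>\<U>. U \<inter> Y \<noteq> {}}"
    using f by auto
  ultimately show ?thesis
    using assms(1) by (intro card_inj_on_le) auto
qed

lemma lebesgue_number_cball_subset:
  assumes "ereal r < lebesgue_number Z \<U>" "z \<in> Z"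
  obtains U where "U \<in> \<U>" "Z \<inter> cball z r \<subseteq> U"
proof -
  have "ereal r < (SUP U\<in>\<U>. dist_compl Z U z)"
    using assms unfolding lebesgue_number_def by (meson INF_lower less_le_trans)
  then obtain U where U: "U \<in> \<U>" "ereal r < dist_compl Z U z"
    by (auto simp: less_SUP_iff)
  have "Z \<inter> cball z r \<subseteq> U"
  proof
    fix x assume x: "x \<in> Z \<inter> cball z r"
    show "x \<in> U"
    proof (rule ccontr)
      assume "x \<notin> U"
      then have "dist_compl Z U z \<le> ereal r"
        using x infdist_le[of x "Z - U" z] by (auto simp: dist_compl_def)
      then show False
        using U(2) by simp
    qed
  qed
  with U(1) show ?thesis
    using that by blast
qed

lemma powr_log_commute:
  fixes b c t :: real
  assumes "1 < b" "0 < c" "0 < t"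
  shows "c powr (log b t) = t powr (log b c)"
  using assms by (simp add: powr_def log_def mult_ac)

lemma power_nat_ceiling_log_le:
  fixes b C t :: real
  assumes "1 < b" "1 \<le> C" "1 \<le> t"
  shows "C ^ (nat \<lceil>log b t\<rceil> + j) \<le> C powr (j + 1) * t powr (log b C)"
proof -
  have "0 \<le> log b t"
    using assms by simp
  then have "real (nat \<lceil>log b t\<rceil> + j) \<le> log b t + (j + 1)"
    by linarith
  then have "C ^ (nat \<lceil>log b t\<rceil> + j) \<le> C powr (log b t + (j + 1))"
    using assms(2) by (simp add: powr_realpow[symmetric] powr_mono)
  also have "\<dots> = C powr (j + 1) * t powr (log b C)"
    using assms powr_log_commute[of b C t] by (simp add: powr_add)
  finally show ?thesis .
qed

text \<open>Condition (3) is only imposed from level 1 on, so level 0 branches into \<open>card (\<V> 1)\<close> sets.\<close>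

lemma hag_branching_le:
  assumes H: "homogeneous_approximation_graph Z \<V> lam \<eta> \<theta> C\<Gamma> N\<Gamma>" and "p \<in> \<V> j"
  shows "card {w\<in>\<V> (Suc j). w \<subseteq> p} \<le> max (max C\<Gamma> (card (\<V> 1))) 1"
proof (cases "j = 0")
  case True
  have "finite (\<V> 1)"
    using H by (simp add: homogeneous_approximation_graph_def finite_open_cover_def)
  then have "card {w\<in>\<V> (Suc j). w \<subseteq> p} \<le> card (\<V> 1)"
    using True by (intro card_mono) auto
  then show ?thesis
    by linarith
next
  case False
  then have "card {w\<in>\<V> (Suc j). w \<subseteq> p} \<le> C\<Gamma>"
    using H assms(2) by (simp add: homogeneous_approximation_graph_def)
  then show ?thesis
    by linarith
qed

lemma hag_diameter_less:
  assumes H: "homogeneous_approximation_graph Z \<V> lam \<eta> \<theta> C\<Gamma> N\<Gamma>"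
    and "\<theta> < a * lam ^ n" "w \<in> \<V> (Suc n)"
  shows "diameter w < a"
proof -
  have "1 < lam" and "\<forall>n\<ge>1. \<forall>V\<in>\<V> n. diameter V \<le> lam powr (1 - real n) * \<theta>"
    using H by (auto simp: homogeneous_approximation_graph_def)
  then have "diameter w \<le> lam powr (- real n) * \<theta>"
    using assms(3) by fastforce
  moreover from \<open>1 < lam\<close> have "lam powr (- real n) * \<theta> < a"
    using assms(2) by (simp add: powr_minus powr_realpow field_simps)
  ultimately show ?thesis
    by linarith
qed

lemma hag_coarse_level:
  assumes H: "homogeneous_approximation_graph Z \<V> lam \<eta> \<theta> C\<Gamma> N\<Gamma>"
    and "z \<in> Z" "0 < b"
  obtains m v where "v \<in> \<V> m" "Z \<inter> cball z b \<subseteq> v" "\<eta> \<le> b * lam ^ m"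
    "card {w\<in>\<V> m. w \<inter> v \<noteq> {}} \<le> max N\<Gamma> 1"
proof -
  have lam: "1 < lam" and "0 < \<eta>" and "\<V> 0 = {Z}"
    and lebesgue: "\<And>n. 1 \<le> n \<Longrightarrow> ereal (lam powr (1 - real n) * \<eta>) \<le> lebesgue_number Z (\<V> n)"
    and overlap: "\<And>n v. 1 \<le> n \<Longrightarrow> v \<in> \<V> n \<Longrightarrow> card {w\<in>\<V> n. w \<inter> v \<noteq> {}} \<le> N\<Gamma>"
    using H by (auto simp: homogeneous_approximation_graph_def)
  define m where "m = nat \<lceil>log lam (\<eta> / b)\<rceil>"
  have "log lam (\<eta> / b) \<le> m"
    unfolding m_def by linarith
  then have "\<eta> / b \<le> lam powr m"
    using lam \<open>0 < \<eta>\<close> \<open>0 < b\<close> by (simp add: log_le_iff[symmetric])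
  then have "\<eta> \<le> b * lam ^ m"
    using lam \<open>0 < b\<close> by (simp add: powr_realpow divide_le_eq mult.commute)
  show ?thesis
  proof (cases "m = 0")
    case True
    have "card {w\<in>\<V> 0. w \<inter> Z \<noteq> {}} \<le> card {Z}"
      using \<open>\<V> 0 = {Z}\<close> by (intro card_mono) auto
    then show ?thesis
      using that[of Z 0] True \<open>\<V> 0 = {Z}\<close> \<open>\<eta> \<le> b * lam ^ m\<close> by simp
  next
    case False
    then have "real m - 1 < log lam (\<eta> / b)"
      unfolding m_def by linarith
    then have "lam powr (real m - 1) < \<eta> / b"
      using lam \<open>0 < \<eta>\<close> \<open>0 < b\<close> by (simp add: less_log_iff[symmetric])
    then have "b < lam powr (1 - real m) * \<eta>"
      using lam \<open>0 < b\<close> by (simp add: powr_diff field_simps)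
    then have "ereal b < ereal (lam powr (1 - real m) * \<eta>)"
      by simp
    also have "\<dots> \<le> lebesgue_number Z (\<V> m)"
      using lebesgue[of m] False by simp
    finally have "ereal b < lebesgue_number Z (\<V> m)" .
    then obtain v where "v \<in> \<V> m" "Z \<inter> cball z b \<subseteq> v"
      using \<open>z \<in> Z\<close> by (rule lebesgue_number_cball_subset)
    moreover have "card {w\<in>\<V> m. w \<inter> v \<noteq> {}} \<le> max N\<Gamma> 1"
      using overlap[of m v] False \<open>v \<in> \<V> m\<close> by simp
    ultimately show ?thesis
      using that \<open>\<eta> \<le> b * lam ^ m\<close> by blast
  qed
qed

lemma hag_card_separated_le:
  fixes Z :: "'a::metric_space set"
  assumes "compact Z" and H: "homogeneous_approximation_graph Z \<V> lam \<eta> \<theta> C\<Gamma> N\<Gamma>"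
    and "0 < a" "a \<le> b" "Y \<subseteq> Z"
    and separated: "\<And>y y'. y \<in> Y \<Longrightarrow> y' \<in> Y \<Longrightarrow> y \<noteq> y' \<Longrightarrow> a \<le> dist y y' \<and> dist y y' \<le> b"
  shows "card Y \<le>
    max N\<Gamma> 1 * max (max C\<Gamma> (card (\<V> 1))) 1 ^ (nat \<lceil>log lam (\<theta> / \<eta> * (b / a))\<rceil> + 2)"
proof (cases "Y = {}")
  case True
  then show ?thesis by simp
next
  case False
  then obtain z where "z \<in> Y" by blast
  have lam: "1 < lam" and "0 < \<eta>" "\<eta> \<le> \<theta>" and fin: "\<And>n. finite (\<V> n)"
    and cover: "\<And>n. \<Union>(\<V> n) = Z" and parent: "\<And>n w. w \<in> \<V> (Suc n) \<Longrightarrow> \<exists>p\<in>\<V> n. w \<subseteq> p"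
    using H by (auto simp: homogeneous_approximation_graph_def finite_open_cover_def)
  have "Y \<subseteq> Z \<inter> cball z b"
    using \<open>Y \<subseteq> Z\<close> \<open>z \<in> Y\<close> separated \<open>0 < a\<close> \<open>a \<le> b\<close> by fastforce
  have "z \<in> Z" "0 < b"
    using \<open>z \<in> Y\<close> \<open>Y \<subseteq> Z\<close> \<open>0 < a\<close> \<open>a \<le> b\<close> by auto
  then obtain m v where "v \<in> \<V> m" "Z \<inter> cball z b \<subseteq> v" "\<eta> \<le> b * lam ^ m"
    and overlap: "card {w\<in>\<V> m. w \<inter> v \<noteq> {}} \<le> max N\<Gamma> 1"
    by (rule hag_coarse_level[OF H])
  with \<open>Y \<subseteq> Z \<inter> cball z b\<close> have "Y \<subseteq> v"
    by blast
  txt \<open>Level \<open>m + Suc j\<close> is the fine level: its elements have diameter below \<open>a\<close>.\<close>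
  define j where "j = nat \<lceil>log lam (\<theta> / \<eta> * (b / a))\<rceil> + 1"
  have "\<theta> / \<eta> * (b / a) < lam ^ j"
  proof -
    have "log lam (\<theta> / \<eta> * (b / a)) < j"
      unfolding j_def by linarith
    then show ?thesis
      using lam \<open>0 < \<eta>\<close> \<open>\<eta> \<le> \<theta>\<close> \<open>0 < a\<close> \<open>a \<le> b\<close>
      by (simp add: log_less_iff powr_realpow)
  qed
  have "\<theta> < a * lam ^ (m + j)"
  proof -
    have "\<theta> = a * \<eta> / b * (\<theta> / \<eta> * (b / a))"
      using \<open>0 < \<eta>\<close> \<open>0 < a\<close> \<open>a \<le> b\<close> by (simp add: field_simps)
    also have "\<dots> < a * \<eta> / b * lam ^ j"
      using \<open>\<theta> / \<eta> * (b / a) < lam ^ j\<close> \<open>0 < \<eta>\<close> \<open>0 < a\<close> \<open>a \<le> b\<close>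
      by (intro mult_strict_left_mono) auto
    also have "a * \<eta> / b \<le> a * lam ^ m"
      using \<open>\<eta> \<le> b * lam ^ m\<close> \<open>0 < a\<close> \<open>a \<le> b\<close> by (simp add: field_simps)
    finally show ?thesis
      using lam by (simp add: power_add mult_right_mono mult.assoc)
  qed
  have small: "bounded w \<and> diameter w < a" if "w \<in> \<V> (m + Suc j)" for w
  proof
    have "w \<subseteq> Z"
      using cover that by blast
    then show "bounded w"
      using \<open>compact Z\<close> compact_imp_bounded bounded_subset by blast
    show "diameter w < a"
      using hag_diameter_less[OF H \<open>\<theta> < a * lam ^ (m + j)\<close>] that by simp
  qed
  have "card Y \<le> card {w\<in>\<V> (m + Suc j). w \<inter> Y \<noteq> {}}"
    using fin cover small separated \<open>Y \<subseteq> Z\<close>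
    by (intro card_le_card_meeting_if_separated[where a = a]) auto
  also have "\<dots> \<le> card {w\<in>\<V> m. w \<inter> Y \<noteq> {}} * max (max C\<Gamma> (card (\<V> 1))) 1 ^ Suc j"
    using fin parent hag_branching_le[OF H] by (rule card_meeting_refinement_le)
  also have "\<dots> \<le> max N\<Gamma> 1 * max (max C\<Gamma> (card (\<V> 1))) 1 ^ Suc j"
  proof (intro mult_right_mono)
    have "card {w\<in>\<V> m. w \<inter> Y \<noteq> {}} \<le> card {w\<in>\<V> m. w \<inter> v \<noteq> {}}"
      using fin \<open>Y \<subseteq> v\<close> by (intro card_mono) auto
    then show "card {w\<in>\<V> m. w \<inter> Y \<noteq> {}} \<le> max N\<Gamma> 1"
      using overlap by linarith
  qed simp
  finally show ?thesis
    unfolding j_def by simp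
qed

lemma hag_assouad_admissible:
  fixes Z :: "'a::metric_space set"
  assumes "compact Z" and H: "homogeneous_approximation_graph Z \<V> lam \<eta> \<theta> C\<Gamma> N\<Gamma>"
  shows "assouad_admissible Z (log lam (max (max C\<Gamma> (card (\<V> 1))) 1))"
proof -
  define C where "C = real (max (max C\<Gamma> (card (\<V> 1))) 1)"
  define s where "s = log lam C"
  have lam: "1 < lam" and "0 < \<eta>" "\<eta> \<le> \<theta>"
    using H by (auto simp: homogeneous_approximation_graph_def)
  have "1 \<le> C"
    unfolding C_def by simp
  have "real (card Y) \<le> (max N\<Gamma> 1 * C powr 3 * (\<theta> / \<eta>) powr s) * (b / a) powr s"
    if "0 < a" "a \<le> b" "Y \<subseteq> Z"
      and "\<forall>y\<in>Y. \<forall>y'\<in>Y. y \<noteq> y' \<longrightarrow> a \<le> dist y y' \<and> dist y y' \<le> b" for a b Y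
  proof -
    have "1 \<le> \<theta> / \<eta> * (b / a)"
      using that \<open>0 < \<eta>\<close> \<open>\<eta> \<le> \<theta>\<close> mult_mono[of 1 "\<theta> / \<eta>" 1 "b / a"] by simp
    have "card Y \<le>
      max N\<Gamma> 1 * max (max C\<Gamma> (card (\<V> 1))) 1 ^ (nat \<lceil>log lam (\<theta> / \<eta> * (b / a))\<rceil> + 2)"
      using hag_card_separated_le[OF \<open>compact Z\<close> H that(1-3)] that(4) by blast
    then have "real (card Y) \<le> max N\<Gamma> 1 * C ^ (nat \<lceil>log lam (\<theta> / \<eta> * (b / a))\<rceil> + 2)"
      unfolding C_def of_nat_mult[symmetric] of_nat_power[symmetric] of_nat_le_iff .
    also have "\<dots> \<le> max N\<Gamma> 1 * (C powr 3 * (\<theta> / \<eta> * (b / a)) powr s)"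
      using power_nat_ceiling_log_le[OF lam \<open>1 \<le> C\<close> \<open>1 \<le> \<theta> / \<eta> * (b / a)\<close>, of 2]
      unfolding s_def by (intro mult_left_mono) auto
    also have "\<dots> = (max N\<Gamma> 1 * C powr 3 * (\<theta> / \<eta>) powr s) * (b / a) powr s"
      using that \<open>0 < \<eta>\<close> \<open>\<eta> \<le> \<theta>\<close>
      by (simp add: powr_mult del: times_divide_eq_left times_divide_eq_right)
    finally show ?thesis .
  qed
  moreover have "0 \<le> s"
    unfolding s_def using lam \<open>1 \<le> C\<close> by simp
  ultimately show ?thesis
    unfolding assouad_admissible_def s_def C_def by blast
qed

theorem proposition3p2:
  fixes Z :: "'a::metric_space set"
  assumes "compact Z"
    and "homogeneous_approximation_graph Z \<V> lam \<eta> \<theta> C\<Gamma> N\<Gamma>"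
  shows "assouad_dim Z < \<infinity>"
proof -
  have "assouad_dim Z \<le> ereal (log lam (max (max C\<Gamma> (card (\<V> 1))) 1))"
    unfolding assouad_dim_def using hag_assouad_admissible[OF assms] by (intro INF_lower) simp
  also have "\<dots> < \<infinity>"
    by simp
  finally show ?thesis .
qed

end
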